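(* Let $f:\mathbb{R}^d\to\mathbb{R}$ be twice differentiable with $f^*:=\sup_\theta f(\theta)$, $f(\theta)<f^*$ for all $\theta$, $L_1$ non-uniform smooth, and satisfying the reversed Łojasiewicz inequality $\|\nabla f(\theta)\|_2\le\nu[f^*-f(\theta)]$ with $\nu>0$. Fix $h\in(0,1)$, $\eta_{\max}>0$ and a point $\theta_t$. Then the exact backtracking procedure from $\eta_{\max}$ with the Armijo condition on the log-loss $$\ln(f^*-f(\theta_t+\eta_t\nabla f(\theta_t)))\le\ln(f^*-f(\theta_t))-h\,\eta_t\frac{\|\nabla f(\theta_t)\|_2^2}{f^*-f(\theta_t)}$$ terminates and returns a step-size $$\eta_t\ge\min\Big\{\eta_{\max},\ \frac{2(1-h)}{L_1\nu\,[f^*-f(\theta_t)]}\Big\}.$$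
   Context: $f$ is $L_1$ non-uniform smooth: $|f(\theta)-f(\theta')-\langle\nabla f(\theta'),\theta-\theta'\rangle|\le\frac{L_1\|\nabla f(\theta')\|_2}{2}\|\theta-\theta'\|_2^2$ for all $\theta,\theta'$. Exact backtracking returns the largest step-size in $(0,\eta_{\max}]$ satisfying the condition. *)

theory Defs
  imports "HOL-Analysis.Analysis"
begin

text \<open>Armijo condition on the log-loss for gradient ascent step \<open>\<theta> + \<eta> \<nabla>f(\<theta>)\<close>;
  \<open>g\<close> is the gradient of \<open>f\<close>.\<close>
definition armijo_log ::
  "('a::real_inner \<Rightarrow> real) \<Rightarrow> ('a \<Rightarrow> 'a) \<Rightarrow> real \<Rightarrow> real \<Rightarrow> 'a \<Rightarrow> real \<Rightarrow> bool" where
  "armijo_log f g fstar h \<theta> \<eta> \<longleftrightarrow>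
     ln (fstar - f (\<theta> + \<eta> *\<^sub>R g \<theta>))
       \<le> ln (fstar - f \<theta>) - h * \<eta> * (norm (g \<theta>))\<^sup>2 / (fstar - f \<theta>)"

definition exact_backtracking_step ::
  "('a::real_inner \<Rightarrow> real) \<Rightarrow> ('a \<Rightarrow> 'a) \<Rightarrow> real \<Rightarrow> real \<Rightarrow> real \<Rightarrow> 'a \<Rightarrow> real \<Rightarrow> bool" where
  "exact_backtracking_step f g fstar h \<eta>max \<theta> \<eta> \<longleftrightarrow>
     \<eta> \<in> {0<..\<eta>max} \<and> armijo_log f g fstar h \<theta> \<eta> \<and>
     (\<forall>\<eta>'\<in>{0<..\<eta>max}. armijo_log f g fstar h \<theta> \<eta>' \<longrightarrow> \<eta>' \<le> \<eta>)"

end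

theory Submission
  imports Defs
begin

text \<open>Non-uniform smoothness bounds \<open>f(\<theta> + \<eta> \<nabla>f(\<theta>))\<close> from below by
  \<open>f(\<theta>) + \<eta> \<parallel>\<nabla>f(\<theta>)\<parallel>\<^sup>2 (1 - L\<^sub>1 \<eta> \<parallel>\<nabla>f(\<theta>)\<parallel> / 2)\<close>, and the reversed
  Lojasiewicz inequality replaces \<open>\<parallel>\<nabla>f(\<theta>)\<parallel>\<close> in the correction term by \<open>\<nu> (f\<^sup>* - f(\<theta>))\<close>.
  Hence for \<open>\<eta> \<le> 2(1-h)/(L\<^sub>1 \<nu> (f\<^sup>* - f(\<theta>)))\<close> the gap \<open>f\<^sup>* - f\<close> drops by at least
  \<open>h \<eta> \<parallel>\<nabla>f(\<theta>)\<parallel>\<^sup>2\<close>, and concavity of \<open>ln\<close> turns this into the Armijo condition on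
  the log-loss. Since \<open>f\<close> is continuous and stays below \<open>f\<^sup>*\<close>, the set of step-sizes
  satisfying the Armijo condition is closed, so its maximum over \<open>(0, \<eta>\<^sub>m\<^sub>a\<^sub>x]\<close> exists
  and lies above every admissible threshold.\<close>

definition nonuniform_smooth :: "('a::real_inner \<Rightarrow> real) \<Rightarrow> ('a \<Rightarrow> 'a) \<Rightarrow> real \<Rightarrow> bool" where
  "nonuniform_smooth f g L1 \<longleftrightarrow>
     (\<forall>\<theta> \<theta>'. \<bar>f \<theta> - f \<theta>' - g \<theta>' \<bullet> (\<theta> - \<theta>')\<bar> \<le> L1 * norm (g \<theta>') / 2 * (norm (\<theta> - \<theta>'))\<^sup>2)"

lemma nonuniform_smooth_gradient_step:
  assumes "nonuniform_smooth f g L1"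
  shows "f \<theta> + \<eta> * (norm (g \<theta>))\<^sup>2 - L1 * norm (g \<theta>) / 2 * (\<eta>\<^sup>2 * (norm (g \<theta>))\<^sup>2)
           \<le> f (\<theta> + \<eta> *\<^sub>R g \<theta>)"
proof -
  have inner: "g \<theta> \<bullet> (\<eta> *\<^sub>R g \<theta>) = \<eta> * (norm (g \<theta>))\<^sup>2"
    by (simp add: power2_norm_eq_inner)
  have norm_sq: "(norm (\<eta> *\<^sub>R g \<theta>))\<^sup>2 = \<eta>\<^sup>2 * (norm (g \<theta>))\<^sup>2"
    by (simp add: power_mult_distrib)
  have "- (f (\<theta> + \<eta> *\<^sub>R g \<theta>) - f \<theta> - g \<theta> \<bullet> (\<eta> *\<^sub>R g \<theta>))
          \<le> L1 * norm (g \<theta>) / 2 * (norm (\<eta> *\<^sub>R g \<theta>))\<^sup>2"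
    using abs_le_D2[OF assms[unfolded nonuniform_smooth_def, rule_format,
                             of "\<theta> + \<eta> *\<^sub>R g \<theta>" \<theta>]]
    by simp
  then show ?thesis
    unfolding inner norm_sq by linarith
qed

lemma nonuniform_smooth_constant_nonneg:
  assumes "nonuniform_smooth f g L1" and "g \<theta> \<noteq> 0"
  shows "L1 \<ge> 0"
proof (rule ccontr)
  assume "\<not> L1 \<ge> 0"
  then have "L1 * norm (g \<theta>) / 2 * (norm (g \<theta>))\<^sup>2 < 0"
    using assms(2) by (simp add: mult_neg_pos)
  moreover have "0 \<le> L1 * norm (g \<theta>) / 2 * (norm (\<theta> + g \<theta> - \<theta>))\<^sup>2"
    using assms(1) unfolding nonuniform_smooth_def by (meson abs_ge_zero order_trans)
  ultimately show False by simp
qed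

lemma sufficient_decrease_small_step:
  assumes smooth: "nonuniform_smooth f g L1"
    and loj: "norm (g \<theta>) \<le> \<nu> * (fstar - f \<theta>)"
    and \<eta>: "0 \<le> \<eta>" "L1 * \<nu> * (fstar - f \<theta>) * \<eta> \<le> 2 * (1 - h)"
  shows "fstar - f (\<theta> + \<eta> *\<^sub>R g \<theta>) \<le> (fstar - f \<theta>) - h * \<eta> * (norm (g \<theta>))\<^sup>2"
proof (cases "g \<theta> = 0")
  case True
  then show ?thesis by simp
next
  case False
  define n where "n = norm (g \<theta>)"
  have "L1 \<ge> 0" using nonuniform_smooth_constant_nonneg[OF smooth False] .
  then have "L1 * n / 2 * (\<eta>\<^sup>2 * n\<^sup>2) \<le> L1 * (\<nu> * (fstar - f \<theta>)) / 2 * (\<eta>\<^sup>2 * n\<^sup>2)"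
    using loj unfolding n_def by (intro mult_right_mono divide_right_mono mult_left_mono) auto
  also have "\<dots> = L1 * \<nu> * (fstar - f \<theta>) * \<eta> / 2 * (\<eta> * n\<^sup>2)"
    by (simp add: power2_eq_square)
  also have "\<dots> \<le> (1 - h) * (\<eta> * n\<^sup>2)"
    using \<eta> by (intro mult_right_mono) auto
  finally show ?thesis
    using nonuniform_smooth_gradient_step[OF smooth, of \<theta> \<eta>] unfolding n_def
    by (simp add: algebra_simps)
qed

lemma ln_diff_le:
  fixes x y :: real
  assumes "0 < x" and "y < x"
  shows "ln (x - y) \<le> ln x - y / x"
proof -
  have "ln ((x - y) / x) \<le> (x - y) / x - 1"
    using assms by (intro ln_le_minus_one) simp
  moreover have "ln ((x - y) / x) = ln (x - y) - ln x"
    using assms by (simp add: ln_div)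
  moreover have "(x - y) / x - 1 = - (y / x)"
    using assms by (simp add: field_simps)
  ultimately show ?thesis by linarith
qed

lemma armijo_log_if_sufficient_decrease:
  assumes below: "\<And>\<theta>. f \<theta> < fstar"
    and decrease: "fstar - f (\<theta> + \<eta> *\<^sub>R g \<theta>) \<le> (fstar - f \<theta>) - h * \<eta> * (norm (g \<theta>))\<^sup>2"
  shows "armijo_log f g fstar h \<theta> \<eta>"
proof -
  have "0 < fstar - f (\<theta> + \<eta> *\<^sub>R g \<theta>)"
    using below by simp
  then have "ln (fstar - f (\<theta> + \<eta> *\<^sub>R g \<theta>)) \<le> ln ((fstar - f \<theta>) - h * \<eta> * (norm (g \<theta>))\<^sup>2)"
    using decrease by (subst ln_le_cancel_iff) auto
  also have "\<dots> \<le> ln (fstar - f \<theta>) - h * \<eta> * (norm (g \<theta>))\<^sup>2 / (fstar - f \<theta>)"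
    using below[of \<theta>] below[of "\<theta> + \<eta> *\<^sub>R g \<theta>"] decrease by (intro ln_diff_le) auto
  finally show ?thesis unfolding armijo_log_def .
qed

lemma closed_armijo_log:
  assumes "continuous_on UNIV f" and below: "\<And>\<theta>. f \<theta> < fstar"
  shows "closed {\<eta>. armijo_log f g fstar h \<theta> \<eta>}"
  unfolding armijo_log_def
proof (rule closed_Collect_le)
  have "continuous_on UNIV (\<lambda>\<eta>. fstar - f (\<theta> + \<eta> *\<^sub>R g \<theta>))"
    by (intro continuous_intros continuous_on_compose2[OF assms(1)]) auto
  then show "continuous_on UNIV (\<lambda>\<eta>. ln (fstar - f (\<theta> + \<eta> *\<^sub>R g \<theta>)))"
    using below by (intro continuous_on_ln) (auto simp: less_imp_neq[symmetric])
  show "continuous_on UNIV (\<lambda>\<eta>. ln (fstar - f \<theta>) - h * \<eta> * (norm (g \<theta>))\<^sup>2 / (fstar - f \<theta>))"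
    using below[of \<theta>] by (intro continuous_intros) auto
qed

lemma closed_greatest_below:
  fixes S :: "real set"
  assumes "closed S" and "a \<in> S" and "a \<le> b"
  obtains x where "x \<in> S" "a \<le> x" "x \<le> b" "\<And>y. y \<in> S \<Longrightarrow> y \<le> b \<Longrightarrow> y \<le> x"
proof -
  have "compact (S \<inter> {a..b})" "S \<inter> {a..b} \<noteq> {}"
    using assms by (auto intro: compact_Int_closed)
  then obtain x where x: "x \<in> S" "a \<le> x" "x \<le> b"
    and greatest: "\<And>y. y \<in> S \<inter> {a..b} \<Longrightarrow> y \<le> x"
    using compact_attains_sup by (metis IntD1 IntD2 atLeastAtMost_iff)
  show ?thesis
  proof (rule that[OF x])
    fix y assume "y \<in> S" "y \<le> b"
    then show "y \<le> x"
      using greatest[of y] x(2) by (cases "a \<le> y") auto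
  qed
qed

lemma exact_backtracking_step_exists:
  assumes "continuous_on UNIV f" and "\<And>\<theta>. f \<theta> < fstar"
    and "0 < \<eta>0" "\<eta>0 \<le> \<eta>max" and "armijo_log f g fstar h \<theta> \<eta>0"
  shows "\<exists>\<eta>. exact_backtracking_step f g fstar h \<eta>max \<theta> \<eta> \<and> \<eta>0 \<le> \<eta>"
proof -
  obtain \<eta> where "armijo_log f g fstar h \<theta> \<eta>" "\<eta>0 \<le> \<eta>" "\<eta> \<le> \<eta>max"
    and greatest: "\<And>\<eta>'. armijo_log f g fstar h \<theta> \<eta>' \<Longrightarrow> \<eta>' \<le> \<eta>max \<Longrightarrow> \<eta>' \<le> \<eta>"
    using closed_greatest_below[OF closed_armijo_log[OF assms(1,2), of g h \<theta>], of \<eta>0 \<eta>max]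
      assms(4,5) by auto
  with assms(3) show ?thesis
    unfolding exact_backtracking_step_def by (intro exI[of _ \<eta>]) auto
qed

lemma exists_step_below_threshold:
  fixes \<eta>max a c :: real
  assumes "0 < \<eta>max" and "0 < a"
  obtains \<eta>0 where "0 < \<eta>0" "\<eta>0 \<le> \<eta>max" "c * \<eta>0 \<le> a" "min \<eta>max (a / c) \<le> \<eta>0"
proof (cases "c \<le> 0")
  case True
  then show ?thesis
    using assms mult_nonpos_nonneg[of c \<eta>max] by (intro that[of \<eta>max]) auto
next
  case False
  then show ?thesis
    using assms by (intro that[of "min \<eta>max (a / c)"]) (auto simp: min_def field_simps)
qed

theorem lemma2:
  fixes f :: "real ^ 'd \<Rightarrow> real" and g :: "real ^ 'd \<Rightarrow> real ^ 'd"
    and fstar L1 \<nu> h \<eta>max :: real and \<theta>t :: "real ^ 'd"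
  assumes grad: "\<And>\<theta>. (f has_derivative (\<lambda>v. g \<theta> \<bullet> v)) (at \<theta>)"
    and twice: "\<And>\<theta>. g differentiable (at \<theta>)"
    and bdd: "bdd_above (range f)"
    and fstar_def: "fstar = (SUP \<theta>. f \<theta>)"
    and below: "\<And>\<theta>. f \<theta> < fstar"
    and smooth: "\<And>\<theta> \<theta>'. \<bar>f \<theta> - f \<theta>' - g \<theta>' \<bullet> (\<theta> - \<theta>')\<bar>
                    \<le> L1 * norm (g \<theta>') / 2 * (norm (\<theta> - \<theta>'))\<^sup>2"
    and loj: "\<And>\<theta>. norm (g \<theta>) \<le> \<nu> * (fstar - f \<theta>)"
    and \<nu>: "\<nu> > 0"
    and h: "0 < h" "h < 1"
    and \<eta>max: "\<eta>max > 0"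
  shows "\<exists>\<eta>. exact_backtracking_step f g fstar h \<eta>max \<theta>t \<eta> \<and>
           \<eta> \<ge> min \<eta>max (2 * (1 - h) / (L1 * \<nu> * (fstar - f \<theta>t)))"
proof -
  obtain \<eta>0 where \<eta>0: "0 < \<eta>0" "\<eta>0 \<le> \<eta>max"
    and small: "L1 * \<nu> * (fstar - f \<theta>t) * \<eta>0 \<le> 2 * (1 - h)"
    and bound: "min \<eta>max (2 * (1 - h) / (L1 * \<nu> * (fstar - f \<theta>t))) \<le> \<eta>0"
    using exists_step_below_threshold[OF \<eta>max, of "2 * (1 - h)"] h by auto
  have "nonuniform_smooth f g L1"
    using smooth unfolding nonuniform_smooth_def by blast
  then have armijo: "armijo_log f g fstar h \<theta>t \<eta>0"
    using sufficient_decrease_small_step[of f g L1 \<theta>t \<nu> fstar \<eta>0 h] loj small \<eta>0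
    by (intro armijo_log_if_sufficient_decrease[OF below]) auto
  have "continuous_on UNIV f"
    using grad by (meson continuous_at_imp_continuous_on has_derivative_continuous)
  then obtain \<eta> where "exact_backtracking_step f g fstar h \<eta>max \<theta>t \<eta>" "\<eta>0 \<le> \<eta>"
    using exact_backtracking_step_exists[of f fstar, OF _ below \<eta>0 armijo] by blast
  with bound show ?thesis by auto
qed

end
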